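(* Let $f(z)=z+a_2z^2+a_3z^3+\cdots$ belong to the class $\mathcal{S}_G^{\ast}$. Then $$|a_n|\le \frac{1}{2(n-1)}\quad (n=2,3,4,5),\qquad |a_6|\le \frac{13}{48}.$$ The estimates for $|a_2|,|a_3|,|a_4|,|a_5|$ are sharp.
   Context: Let $\mathcal{U}=\{z\in\mathbb{C}:|z|<1\}$. Let $\mathcal{S}$ denote the class of functions $f$ analytic and univalent in $\mathcal{U}$ normalized by $f(0)=0$, $f'(0)=1$, i.e. $f(z)=z+\sum_{n\ge2}a_nz^n$. For analytic $g,h$ on $\mathcal{U}$, $g\prec h$ ($g$ is subordinate to $h$) means there is an analytic $w$ on $\mathcal{U}$ with $w(0)=0$, $|w(z)|<1$, and $g(z)=h(w(z))$ for $z\in\mathcal{U}$. Let $\Psi(z)=\frac{z}{\ln(1+z)}$ on $\mathcal{U}$ (principal branch of the logarithm, $\Psi(0)=1$); it is the generating function $\sum_{n\ge0}G_nz^n$ of the Gregory coefficients $G_n$. Define $\mathcal{S}_G^{\ast}=\{f\in\mathcal{S}: zf'(z)/f(z)\prec\Psi(z)\}$. "Sharp" means the bound is attained by some function in $\mathcal{S}_G^{\ast}$. *)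

theory Defs
  imports "HOL-Complex_Analysis.Complex_Analysis"
begin

abbreviation unit_disk :: "complex set" where
  "unit_disk \<equiv> ball 0 1"

definition class_S :: "(complex \<Rightarrow> complex) set" where
  "class_S = {f. f holomorphic_on unit_disk \<and> inj_on f unit_disk \<and> f 0 = 0 \<and> deriv f 0 = 1}"

definition taylor_coeff :: "(complex \<Rightarrow> complex) \<Rightarrow> nat \<Rightarrow> complex" where
  "taylor_coeff f n = (deriv ^^ n) f 0 / of_nat (fact n)"

definition subordinate :: "(complex \<Rightarrow> complex) \<Rightarrow> (complex \<Rightarrow> complex) \<Rightarrow> bool" where
  "subordinate g h \<longleftrightarrow> (\<exists>w. w holomorphic_on unit_disk \<and> w 0 = 0 \<and>
     (\<forall>z\<in>unit_disk. norm (w z) < 1) \<and> (\<forall>z\<in>unit_disk. g z = h (w z)))"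

text \<open>Psi(z) = z / log(1+z), principal branch, with Psi(0) = 1 (removable singularity).\<close>
definition Psi :: "complex \<Rightarrow> complex" where
  "Psi z = (if z = 0 then 1 else z / Ln (1 + z))"

text \<open>z f'(z)/f(z), extended by its limit value 1 at z = 0.\<close>
definition starlike_quot :: "(complex \<Rightarrow> complex) \<Rightarrow> complex \<Rightarrow> complex" where
  "starlike_quot f z = (if z = 0 then 1 else z * deriv f z / f z)"

definition class_SG :: "(complex \<Rightarrow> complex) set" where
  "class_SG = {f \<in> class_S. subordinate (starlike_quot f) Psi}"

end

theory Submission
  imports Defs
begin

text \<open>
  Write \<open>z f'(z)/f(z) = \<Psi>(w(z))\<close> with a Schwarz function \<open>w\<close>. Comparing
  Taylor coefficients, the coefficients of \<open>\<Psi>\<close> being the Gregory coefficients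
  \<open>1, 1/2, -1/12, 1/24, -19/720, 3/160\<close>, expresses \<open>a\<^sub>2, \<dots>, a\<^sub>6\<close> as polynomials
  in the Taylor coefficients \<open>c\<^sub>k\<close> of \<open>w\<close>, and Bessel's inequality
  \<open>\<Sum>|c\<^sub>k|\<^sup>2 \<le> 1\<close> bounds these polynomials.

  For \<open>n = k + 1 \<le> 5\<close> the bound is attained by \<open>f(z) = z exp(q(z))\<close> with
  \<open>1 + z q'(z) = \<Psi>(z\<^sup>k)\<close>. This \<open>f\<close> is univalent because \<open>Re \<Psi> > 0\<close>: on the
  left half-plane the lift \<open>\<zeta> \<mapsto> \<zeta> + q(exp \<zeta>)\<close> of \<open>log f(exp \<zeta>)\<close> has derivative
  \<open>\<Psi>(exp (k\<zeta>))\<close> with positive real part, so it is injective (Noshiro--Warschawski),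
  and it commutes with translation by \<open>2\<pi>i\<close>.
\<close>

unbundle no vec_syntax

section \<open>The Gregory series\<close>

lemma holomorphic_on_unit_disk_has_fps_expansion:
  "f holomorphic_on ball 0 1 \<Longrightarrow> f has_fps_expansion fps_expansion f 0"
  by (rule has_fps_expansion_fps_expansion[OF open_ball]) auto

lemma taylor_coeff_eq_fps_nth:
  "f has_fps_expansion F \<Longrightarrow> taylor_coeff f n = F $ n"
  by (simp add: taylor_coeff_def fps_nth_fps_expansion)

lemma one_plus_notin_nonpos_Reals: "norm (z::complex) < 1 \<Longrightarrow> 1 + z \<notin> \<real>\<^sub>\<le>\<^sub>0"
  using abs_Re_le_cmod[of z] by (auto simp: complex_nonpos_Reals_iff)

lemma Ln_one_plus_has_field_derivative:
  "norm z < 1 \<Longrightarrow> ((\<lambda>z. Ln (1 + z)) has_field_derivative inverse (1 + z)) (at z)"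
  by (auto intro!: derivative_eq_intros dest: one_plus_notin_nonpos_Reals)

lemma Ln_one_plus_holomorphic: "(\<lambda>z. Ln (1 + z)) holomorphic_on ball 0 1"
  by (intro holomorphic_intros) (simp add: one_plus_notin_nonpos_Reals)

lemma Ln_one_plus_has_fps_expansion: "(\<lambda>z. Ln (1 + z)) has_fps_expansion fps_ln 1"
proof -
  define L where "L = fps_expansion (\<lambda>z. Ln (1 + z)) 0"
  have L: "(\<lambda>z. Ln (1 + z)) has_fps_expansion L"
    unfolding L_def by (rule holomorphic_on_unit_disk_has_fps_expansion[OF Ln_one_plus_holomorphic])
  have "eventually (\<lambda>z. z \<in> ball 0 1) (nhds (0::complex))"
    by (intro eventually_nhds_in_open) auto
  then have ev: "eventually (\<lambda>z. deriv (\<lambda>z. Ln (1 + z)) z = inverse (1 + z)) (nhds 0)"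
    by eventually_elim (auto intro!: DERIV_imp_deriv Ln_one_plus_has_field_derivative)
  then have "(\<lambda>z. inverse (1 + z)) has_fps_expansion fps_deriv L"
    using has_fps_expansion_cong[OF ev refl] has_fps_expansion_deriv[OF L] by simp
  moreover have "(\<lambda>z. inverse (1 + z)) has_fps_expansion fps_deriv (fps_ln (1::complex))"
    by (auto simp: fps_ln_deriv intro!: fps_expansion_intros)
  ultimately have "fps_deriv L = fps_deriv (fps_ln 1)"
    using fps_expansion_unique_complex by blast
  moreover have "L $ 0 = 0"
    using fps_nth_fps_expansion[OF L, of 0] by simp
  ultimately have "L = fps_ln 1"
    by (simp add: fps_deriv_eq_iff)
  with L show ?thesis by simp
qed

lemma Psi_holomorphic: "Psi holomorphic_on ball 0 1"
proof -
  define M where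
    "M = (\<lambda>z. if z = 0 then deriv (\<lambda>z. Ln (1 + z)) 0 else (Ln (1 + z) - Ln (1 + 0)) / (z - 0))"
  have "M holomorphic_on ball 0 1"
    unfolding M_def by (rule pole_lemma[OF Ln_one_plus_holomorphic]) auto
  moreover have "deriv (\<lambda>z. Ln (1 + z)) 0 = 1"
    using DERIV_imp_deriv[OF Ln_one_plus_has_field_derivative[of 0]] by simp
  then have "M z \<noteq> 0" and Psi_eq: "Psi z = inverse (M z)" if "z \<in> ball 0 1" for z
    using that one_plus_notin_nonpos_Reals[of z]
    by (auto simp: M_def Psi_def Ln_eq_zero_iff)
  ultimately have "(\<lambda>z. inverse (M z)) holomorphic_on ball 0 1"
    by (auto intro!: holomorphic_intros)
  then show ?thesis
    by (rule holomorphic_transform) (simp add: Psi_eq)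
qed

lemma Psi_mult_Ln: "norm z < 1 \<Longrightarrow> Psi z * Ln (1 + z) = z"
  using one_plus_notin_nonpos_Reals[of z] by (auto simp: Psi_def Ln_eq_zero_iff)

lemma Psi_0 [simp]: "Psi 0 = 1"
  by (simp add: Psi_def)

definition gregory_fps :: "complex fps" where
  "gregory_fps = fps_expansion Psi 0"

lemma Psi_has_fps_expansion: "Psi has_fps_expansion gregory_fps"
  unfolding gregory_fps_def by (rule holomorphic_on_unit_disk_has_fps_expansion[OF Psi_holomorphic])

lemma gregory_fps_mult_fps_ln: "gregory_fps * fps_ln 1 = fps_X"
proof -
  have ev: "eventually (\<lambda>z. Psi z * Ln (1 + z) = z) (nhds 0)"
    using eventually_nhds_in_open[of "ball 0 1" 0] by (auto elim!: eventually_mono simp: Psi_mult_Ln)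
  then have "(\<lambda>z. z) has_fps_expansion gregory_fps * fps_ln 1"
    using has_fps_expansion_cong[OF ev refl]
      has_fps_expansion_mult[OF Psi_has_fps_expansion Ln_one_plus_has_fps_expansion]
    by simp
  then show ?thesis
    using has_fps_expansion_fps_X fps_expansion_unique_complex by blast
qed

lemma gregory_fps_nth:
  "gregory_fps $ 0 = 1" "gregory_fps $ 1 = 1/2" "gregory_fps $ 2 = -1/12"
  "gregory_fps $ 3 = 1/24" "gregory_fps $ 4 = -19/720" "gregory_fps $ 5 = 3/160"
proof -
  have rec: "gregory_fps $ n = - (\<Sum>i<n. gregory_fps $ i * fps_ln 1 $ (n + 1 - i))" if "n > 0" for n
  proof -
    have "(gregory_fps * fps_ln 1) $ (n + 1) = 0"
      using that by (simp add: gregory_fps_mult_fps_ln)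
    then show ?thesis
      by (simp add: fps_mult_nth atLeast0AtMost fps_ln_nth add_eq_0_iff flip: lessThan_Suc_atMost)
  qed
  have "gregory_fps $ 0 = 1"
    using arg_cong[OF gregory_fps_mult_fps_ln, of "\<lambda>F. F $ 1"] by (simp add: fps_mult_nth fps_ln_nth)
  then show "gregory_fps $ 0 = 1" "gregory_fps $ 1 = 1/2" "gregory_fps $ 2 = -1/12"
    "gregory_fps $ 3 = 1/24" "gregory_fps $ 4 = -19/720" "gregory_fps $ 5 = 3/160"
    by (simp_all add: rec lessThan_nat_numeral fps_ln_nth flip: One_nat_def)
qed

section \<open>Coefficients of functions in the class\<close>

lemma fps_compose_gregory_nth:
  fixes W :: "complex fps"
  assumes "W $ 0 = 0"
  shows "(gregory_fps oo W) $ 0 = 1"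
    "(gregory_fps oo W) $ 1 = W $ 1 / 2"
    "(gregory_fps oo W) $ 2 = W $ 2 / 2 - (W $ 1)^2 / 12"
    "(gregory_fps oo W) $ 3 = W $ 3 / 2 - W $ 1 * W $ 2 / 6 + (W $ 1)^3 / 24"
    "(gregory_fps oo W) $ 4 = W $ 4 / 2 - ((W $ 2)^2 + 2 * W $ 1 * W $ 3) / 12
       + (W $ 1)^2 * W $ 2 / 8 - 19/720 * (W $ 1)^4"
    "(gregory_fps oo W) $ 5 = W $ 5 / 2 - (W $ 1 * W $ 4 + W $ 2 * W $ 3) / 6
       + ((W $ 1)^2 * W $ 3 + W $ 1 * (W $ 2)^2) / 8 - 19/180 * (W $ 1)^3 * W $ 2 + 3/160 * (W $ 1)^5"
  using assms
  by (simp_all add: fps_compose_nth fps_mult_nth atMost_nat_numeral atLeast0AtMost power_numeral_reduce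
      gregory_fps_nth[unfolded One_nat_def])
    (simp_all add: field_simps)

lemma fps_X_deriv_eq_mult_gregory_nth:
  fixes A W :: "complex fps"
  assumes eq: "fps_X * fps_deriv A = A * (gregory_fps oo W)"
    and A0: "A $ 0 = 0" and A1: "A $ 1 = 1" and W0: "W $ 0 = 0"
  shows "A $ 2 = W $ 1 / 2"
    "A $ 3 = W $ 2 / 4 + (W $ 1)^2 / 12"
    "A $ 4 = W $ 3 / 6 + 5/72 * W $ 1 * W $ 2 + (W $ 1)^3 / 72"
    "A $ 5 = W $ 4 / 8 + W $ 1 * W $ 3 / 24 + (W $ 2)^2 / 96 + 7/288 * (W $ 1)^2 * W $ 2
       - (W $ 1)^4 / 720"
    "A $ 6 = W $ 5 / 10 + 7/240 * W $ 1 * W $ 4 + W $ 2 * W $ 3 / 120 + 13/720 * (W $ 1)^2 * W $ 3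
       + 47/2880 * W $ 1 * (W $ 2)^2 - 287/43200 * (W $ 1)^3 * W $ 2 + 31/21600 * (W $ 1)^5"
proof -
  define Q where "Q = gregory_fps oo W"
  note q = fps_compose_gregory_nth[OF W0, folded Q_def]
  have rec: "A $ n = (\<Sum>i<n. A $ i * Q $ (n - i)) / of_nat (n - 1)" if "n \<ge> 2" for n
  proof -
    have "of_nat n * A $ n = (fps_X * fps_deriv A) $ n"
      using that by (cases n) simp_all
    also have "\<dots> = (\<Sum>i\<le>n. A $ i * Q $ (n - i))"
      by (simp add: eq Q_def fps_mult_nth atLeast0AtMost)
    also have "\<dots> = A $ n + (\<Sum>i<n. A $ i * Q $ (n - i))"
      by (simp add: q(1) flip: lessThan_Suc_atMost)
    finally show ?thesis
      using that by (simp add: field_simps of_nat_diff)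
  qed
  \<comment> \<open>\<open>rec\<close> unfolds recursively down to \<open>A0\<close> and \<open>A1\<close>; the expanded index sums
     contain \<open>Suc 0\<close> rather than \<open>1\<close>, hence \<open>One_nat_def\<close>.\<close>
  show "A $ 2 = W $ 1 / 2"
    by (simp add: rec lessThan_nat_numeral A0 A1 q flip: One_nat_def)
  show "A $ 3 = W $ 2 / 4 + (W $ 1)^2 / 12"
    by (simp add: rec lessThan_nat_numeral A0 A1 q flip: One_nat_def) (simp add: field_simps eval_nat_numeral)
  show "A $ 4 = W $ 3 / 6 + 5/72 * W $ 1 * W $ 2 + (W $ 1)^3 / 72"
    by (simp add: rec lessThan_nat_numeral A0 A1 q flip: One_nat_def) (simp add: field_simps eval_nat_numeral)
  show "A $ 5 = W $ 4 / 8 + W $ 1 * W $ 3 / 24 + (W $ 2)^2 / 96 + 7/288 * (W $ 1)^2 * W $ 2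
       - (W $ 1)^4 / 720"
    by (simp add: rec lessThan_nat_numeral A0 A1 q flip: One_nat_def) (simp add: field_simps eval_nat_numeral)
  show "A $ 6 = W $ 5 / 10 + 7/240 * W $ 1 * W $ 4 + W $ 2 * W $ 3 / 120 + 13/720 * (W $ 1)^2 * W $ 3
       + 47/2880 * W $ 1 * (W $ 2)^2 - 287/43200 * (W $ 1)^3 * W $ 2 + 31/21600 * (W $ 1)^5"
    by (simp add: rec lessThan_nat_numeral A0 A1 q flip: One_nat_def) (simp add: field_simps eval_nat_numeral)
qed

lemma Psi_subordination_fps_eq:
  assumes f: "f holomorphic_on ball 0 1" and w: "w holomorphic_on ball 0 1" and "w 0 = 0"
    and eq: "\<forall>z\<in>ball 0 1. z * deriv f z = f z * Psi (w z)"
  shows "fps_X * fps_deriv (fps_expansion f 0) = fps_expansion f 0 * (gregory_fps oo fps_expansion w 0)"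
proof -
  have F: "f has_fps_expansion fps_expansion f 0" and W: "w has_fps_expansion fps_expansion w 0"
    using f w by (simp_all add: holomorphic_on_unit_disk_has_fps_expansion)
  have "fps_expansion w 0 $ 0 = 0"
    using taylor_coeff_eq_fps_nth[OF W, of 0] \<open>w 0 = 0\<close> by (simp add: taylor_coeff_def)
  then have fw: "(\<lambda>z. f z * Psi (w z)) has_fps_expansion fps_expansion f 0 * (gregory_fps oo fps_expansion w 0)"
    using has_fps_expansion_mult[OF F has_fps_expansion_compose[OF Psi_has_fps_expansion W]]
    by (simp add: o_def)
  have "eventually (\<lambda>z. z \<in> ball 0 1) (nhds (0::complex))"
    by (intro eventually_nhds_in_open) auto
  then have ev: "eventually (\<lambda>z. f z * Psi (w z) = z * deriv f z) (nhds 0)"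
    by eventually_elim (use eq in auto)
  have "(\<lambda>z. z * deriv f z) has_fps_expansion fps_expansion f 0 * (gregory_fps oo fps_expansion w 0)"
    using has_fps_expansion_cong[OF ev refl] fw by simp
  moreover have "(\<lambda>z. z * deriv f z) has_fps_expansion fps_X * fps_deriv (fps_expansion f 0)"
    by (intro has_fps_expansion_mult has_fps_expansion_fps_X has_fps_expansion_deriv F)
  ultimately show ?thesis
    using fps_expansion_unique_complex by blast
qed

section \<open>Bessel's inequality for bounded analytic functions\<close>

lemma Re_cnj_mult_le_norm_power2: "Re (cnj a * (2 * b - a)) \<le> (norm b)\<^sup>2"
proof -
  have "Re (cnj a * (2 * b - a)) = (norm b)\<^sup>2 - ((Re b - Re a)\<^sup>2 + (Im b - Im a)\<^sup>2)"
    unfolding cmod_power2 by (simp add: power2_eq_square algebra_simps)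
  then show ?thesis
    by (smt (verit) zero_le_power2)
qed

lemma circlepath_integral_Re_le:
  assumes H: "(H has_contour_integral 2 * pi * \<i> * s) (circlepath 0 r)" and "0 < r"
    and le: "\<And>z. norm z = r \<Longrightarrow> Re (z * H z) \<le> B"
  shows "Re s \<le> B"
proof -
  define K where "K = (\<lambda>t. H (circlepath 0 r t) * circlepath 0 r t)"
  have "((\<lambda>t. 2 * pi * \<i> * K t) has_integral 2 * pi * \<i> * s) {0..1}"
    using H unfolding has_contour_integral_def
    by (rule has_integral_spike_eq[of "{}", THEN iffD1, rotated 2])
       (auto simp: K_def vector_derivative_circlepath01, simp add: circlepath)
  then have "((\<lambda>t. inverse (2 * pi * \<i>) * (2 * pi * \<i> * K t)) has_integral
      inverse (2 * pi * \<i>) * (2 * pi * \<i> * s)) {0..1}"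
    by (rule has_integral_mult_right)
  then have "(K has_integral s) {0..1}"
    by (simp add: field_simps)
  then have "((Re \<circ> K) has_integral Re s) {0..1}"
    using has_integral_linear[OF _ bounded_linear_Re] by blast
  moreover have "(Re \<circ> K) t \<le> B" for t
    using le[of "circlepath 0 r t"] \<open>0 < r\<close> by (simp add: K_def circlepath norm_mult mult.commute)
  ultimately show ?thesis
    using has_integral_le[of "Re \<circ> K" "Re s" "{0..1}" "\<lambda>_. B" B] has_integral_const_real[of B 0 1]
    by simp
qed

lemma Cauchy_higher_derivatives_sum_circlepath:
  assumes F: "F holomorphic_on ball 0 1" and r: "0 < r" "r < 1"
  shows "((\<lambda>z. \<Sum>k\<le>N. b k * (F z / z ^ Suc k)) has_contour_integral
      2 * pi * \<i> * (\<Sum>k\<le>N. b k * ((deriv ^^ k) F 0 / fact k))) (circlepath 0 r)"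
proof -
  have "ball 0 r \<subseteq> cball 0 r" "cball 0 r \<subseteq> ball (0::complex) 1"
    using r by auto
  with F have "F holomorphic_on ball 0 r" and "continuous_on (cball 0 r) F"
    by (meson holomorphic_on_subset holomorphic_on_imp_continuous_on)+
  then have "((\<lambda>z. \<Sum>k\<le>N. b k * (F z / (z - 0) ^ Suc k)) has_contour_integral
      (\<Sum>k\<le>N. b k * (2 * pi * \<i> / fact k * (deriv ^^ k) F 0))) (circlepath 0 r)"
    using r by (intro has_contour_integral_sum has_contour_integral_lmul
        Cauchy_has_contour_integral_higher_derivative_circlepath) auto
  then show ?thesis
    by (simp add: sum_distrib_left mult_ac)
qed

lemma circle_mult_sum_eq_cnj_polynomial:
  fixes z F :: complex
  assumes "norm z = r" "0 < r"
  shows "z * (\<Sum>k\<le>N. cnj (c k) * r ^ (2 * k) * (F / z ^ Suc k)) = cnj (\<Sum>k\<le>N. c k * z ^ k) * F"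
proof -
  have "z \<noteq> 0"
    using assms by auto
  moreover have "z * cnj z = r\<^sup>2"
    using complex_norm_square[of z] assms by simp
  ultimately have cnj_z: "cnj z = r\<^sup>2 / z"
    by (simp add: field_simps)
  have "z * (\<Sum>k\<le>N. cnj (c k) * r ^ (2 * k) * (F / z ^ Suc k)) = (\<Sum>k\<le>N. cnj (c k) * (r\<^sup>2 / z) ^ k) * F"
    unfolding sum_distrib_left sum_distrib_right
  proof (rule sum.cong[OF refl])
    fix k
    show "z * (cnj (c k) * r ^ (2 * k) * (F / z ^ Suc k)) = cnj (c k) * (r\<^sup>2 / z) ^ k * F"
      using \<open>z \<noteq> 0\<close>
      by (simp add: field_simps power_mult flip: power_mult_distrib)
        (simp add: power_mult[symmetric] mult.commute)
  qed
  also have "\<dots> = cnj (\<Sum>k\<le>N. c k * z ^ k) * F"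
    by (simp add: cnj_z)
  finally show ?thesis .
qed

text \<open>
  Pairing \<open>F = 2w - T\<close> with the Taylor polynomial \<open>T\<close> of \<open>w\<close> avoids integrating
  \<open>|w|\<^sup>2\<close>: on \<open>|z| = r\<close> the real part of \<open>conj T \<cdot> (2w - T)\<close> is at most \<open>|w|\<^sup>2\<close>,
  and its mean is \<open>\<Sum>|c\<^sub>k|\<^sup>2 r\<^bsup>2k\<^esup>\<close>.
\<close>

lemma taylor_coeff_square_sum_le_radius:
  assumes w: "w holomorphic_on ball 0 1" and bound: "\<forall>z\<in>ball 0 1. norm (w z) \<le> M"
    and r: "0 < r" "r < 1"
  shows "(\<Sum>k\<le>N. (norm (taylor_coeff w k))\<^sup>2 * r ^ (2 * k)) \<le> M\<^sup>2"
proof -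
  define c where "c = taylor_coeff w"
  define T where "T = (\<lambda>z. \<Sum>k\<le>N. c k * z ^ k)"
  define F where "F = (\<lambda>z. 2 * w z - T z)"
  define H where "H = (\<lambda>z. \<Sum>k\<le>N. cnj (c k) * r ^ (2 * k) * (F z / z ^ Suc k))"
  have F_fps: "F has_fps_expansion 2 * fps_expansion w 0 - (\<Sum>k\<le>N. fps_const (c k) * fps_X ^ k)"
    unfolding F_def T_def
    by (intro fps_expansion_intros holomorphic_on_unit_disk_has_fps_expansion w)
  have F_coeff: "(deriv ^^ k) F 0 / fact k = c k" if "k \<le> N" for k
    using that fps_nth_fps_expansion[OF F_fps, of k]
    by (simp add: fps_sum_nth c_def taylor_coeff_eq_fps_nth[OF holomorphic_on_unit_disk_has_fps_expansion[OF w]]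
        if_distrib cong: if_cong)
  have "(\<Sum>k\<le>N. cnj (c k) * r ^ (2 * k) * ((deriv ^^ k) F 0 / fact k))
      = of_real (\<Sum>k\<le>N. (norm (c k))\<^sup>2 * r ^ (2 * k))"
    unfolding of_real_sum
    by (rule sum.cong) (simp_all add: F_coeff complex_norm_square[unfolded of_real_power] mult_ac)
  moreover have "F holomorphic_on ball 0 1"
    unfolding F_def T_def by (intro holomorphic_intros w)
  ultimately have "(H has_contour_integral 2 * pi * \<i> * of_real (\<Sum>k\<le>N. (norm (c k))\<^sup>2 * r ^ (2 * k)))
      (circlepath 0 r)"
    using Cauchy_higher_derivatives_sum_circlepath[OF _ r, of F "\<lambda>k. cnj (c k) * r ^ (2 * k)" N]
    by (simp only: H_def)
  moreover have "Re (z * H z) \<le> M\<^sup>2" if "norm z = r" for z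
  proof -
    have "Re (z * H z) = Re (cnj (T z) * (2 * w z - T z))"
      using circle_mult_sum_eq_cnj_polynomial[OF that \<open>0 < r\<close>] by (simp add: H_def T_def F_def)
    also have "\<dots> \<le> (norm (w z))\<^sup>2"
      by (rule Re_cnj_mult_le_norm_power2)
    also have "\<dots> \<le> M\<^sup>2"
      using bound that r by (auto intro: power_mono)
    finally show ?thesis .
  qed
  ultimately have "Re (of_real (\<Sum>k\<le>N. (norm (c k))\<^sup>2 * r ^ (2 * k))) \<le> M\<^sup>2"
    using circlepath_integral_Re_le \<open>0 < r\<close> by blast
  then show ?thesis
    by (simp add: c_def)
qed

lemma taylor_coeff_square_sum_le:
  assumes "w holomorphic_on ball 0 1" and "\<forall>z\<in>ball 0 1. norm (w z) \<le> M"
  shows "(\<Sum>k\<le>N. (norm (taylor_coeff w k))\<^sup>2) \<le> M\<^sup>2"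
proof -
  define g where "g = (\<lambda>r::real. \<Sum>k\<le>N. (norm (taylor_coeff w k))\<^sup>2 * r ^ (2 * k))"
  have "(g \<longlongrightarrow> g 1) (at_left 1)"
    unfolding g_def by (intro tendsto_intros)
  moreover have "\<forall>r\<in>{0<..<1}. g r \<le> M\<^sup>2"
    using taylor_coeff_square_sum_le_radius[OF assms] by (simp add: g_def)
  then have "eventually (\<lambda>r. g r \<le> M\<^sup>2) (at_left 1)"
    using eventually_at_left_real[of 0 "1::real"] by (auto elim!: eventually_mono)
  ultimately have "g 1 \<le> M\<^sup>2"
    by (rule tendsto_upperbound) simp
  then show ?thesis
    by (simp add: g_def)
qed

section \<open>Coefficient bounds\<close>

lemma le_one_minus_half_if_power2_le:
  fixes x s :: real
  assumes "x\<^sup>2 \<le> 1 - s"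
  shows "x \<le> 1 - s / 2"
proof -
  have "(1 - s / 2)\<^sup>2 = 1 - s + s\<^sup>2 / 4"
    by (simp add: power2_eq_square field_simps)
  then have "x\<^sup>2 \<le> (1 - s / 2)\<^sup>2"
    using assms zero_le_power2[of s] by linarith
  moreover have "0 \<le> 1 - s / 2"
    using assms zero_le_power2[of x] by linarith
  ultimately show ?thesis
    using abs_le_square_iff[of x "1 - s / 2"] by auto
qed

lemma norm_coeff3_formula_le:
  fixes c1 c2 :: complex
  assumes "(norm c1)\<^sup>2 + (norm c2)\<^sup>2 \<le> 1"
  shows "norm (c2 / 4 + c1\<^sup>2 / 12) \<le> 1 / 4"
proof -
  have "norm (c2 / 4 + c1\<^sup>2 / 12) \<le> norm c2 / 4 + (norm c1)\<^sup>2 / 12"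
    by (intro norm_triangle_mono) (simp_all add: norm_divide norm_power)
  also have "\<dots> \<le> 1 / 4"
  proof -
    have "norm c2 \<le> 1 - (norm c1)\<^sup>2 / 2"
      by (rule le_one_minus_half_if_power2_le) (use assms in argo)
    then show ?thesis
      using zero_le_power2[of "norm c1"] by argo
  qed
  finally show ?thesis .
qed

lemma norm_coeff4_formula_le:
  fixes c1 c2 c3 :: complex
  assumes "(norm c1)\<^sup>2 + (norm c2)\<^sup>2 + (norm c3)\<^sup>2 \<le> 1"
  shows "norm (c3 / 6 + 5/72 * c1 * c2 + c1 ^ 3 / 72) \<le> 1 / 6"
proof -
  have "norm (c3 / 6 + 5/72 * c1 * c2 + c1 ^ 3 / 72)
      \<le> norm c3 / 6 + 5/72 * (norm c1 * norm c2) + norm c1 ^ 3 / 72"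
    by (intro norm_triangle_mono) (simp_all add: norm_divide norm_mult norm_power)
  also have "\<dots> \<le> 1 / 6"
  proof -
    have "norm c3 \<le> 1 - ((norm c1)\<^sup>2 + (norm c2)\<^sup>2) / 2"
      by (rule le_one_minus_half_if_power2_le) (use assms in argo)
    moreover have "2 * (norm c1 * norm c2) \<le> (norm c1)\<^sup>2 + (norm c2)\<^sup>2"
      using sum_squares_bound[of "norm c1" "norm c2"] by (simp add: mult.assoc)
    moreover have "(norm c1)\<^sup>2 \<le> 1"
      using assms zero_le_power2[of "norm c2"] zero_le_power2[of "norm c3"] by argo
    then have "norm c1 ^ 3 \<le> (norm c1)\<^sup>2"
      by (intro power_decreasing) (auto simp: power_le_one_iff)
    ultimately show ?thesis
      using zero_le_power2[of "norm c1"] zero_le_power2[of "norm c2"] by argo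
  qed
  finally show ?thesis .
qed

lemma norm_coeff5_formula_le:
  fixes c1 c2 c3 c4 :: complex
  assumes "(norm c1)\<^sup>2 + (norm c2)\<^sup>2 + (norm c3)\<^sup>2 + (norm c4)\<^sup>2 \<le> 1"
  shows "norm (c4 / 8 + c1 * c3 / 24 + c2\<^sup>2 / 96 + 7/288 * c1\<^sup>2 * c2 - c1 ^ 4 / 720) \<le> 1 / 8"
proof -
  have "norm (c4 / 8 + c1 * c3 / 24 + c2\<^sup>2 / 96 + 7/288 * c1\<^sup>2 * c2 - c1 ^ 4 / 720)
      \<le> norm c4 / 8 + norm c1 * norm c3 / 24 + (norm c2)\<^sup>2 / 96 + 7/288 * ((norm c1)\<^sup>2 * norm c2)
        + norm c1 ^ 4 / 720"
    by (intro norm_triangle_mono order_trans[OF norm_triangle_ineq4 add_mono])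
       (simp_all add: norm_divide norm_mult norm_power)
  also have "\<dots> \<le> 1 / 8"
  proof -
    have sq: "0 \<le> (norm c1)\<^sup>2" "0 \<le> (norm c2)\<^sup>2" "0 \<le> (norm c3)\<^sup>2" "0 \<le> (norm c4)\<^sup>2"
      by simp_all
    have "norm c4 \<le> 1 - ((norm c1)\<^sup>2 + (norm c2)\<^sup>2 + (norm c3)\<^sup>2) / 2"
      by (rule le_one_minus_half_if_power2_le) (use assms in argo)
    moreover have "2 * (norm c1 * norm c3) \<le> (norm c1)\<^sup>2 + (norm c3)\<^sup>2"
      using sum_squares_bound[of "norm c1" "norm c3"] by (simp add: mult.assoc)
    moreover have "(norm c1)\<^sup>2 \<le> 1" "(norm c2)\<^sup>2 \<le> 1"
      using assms sq by argo+
    then have "(norm c1)\<^sup>2 * norm c2 \<le> (norm c1)\<^sup>2" and "norm c1 ^ 4 \<le> (norm c1)\<^sup>2"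
      by (auto intro: mult_left_le power_decreasing simp: power_le_one_iff)
    ultimately show ?thesis
      using sq by argo
  qed
  finally show ?thesis .
qed

lemma norm_coeff6_formula_le:
  fixes c1 c2 c3 c4 c5 :: complex
  assumes "norm c1 \<le> 1" "norm c2 \<le> 1" "norm c3 \<le> 1" "norm c4 \<le> 1" "norm c5 \<le> 1"
  shows "norm (c5 / 10 + 7/240 * c1 * c4 + c2 * c3 / 120 + 13/720 * c1\<^sup>2 * c3
      + 47/2880 * c1 * c2\<^sup>2 - 287/43200 * c1 ^ 3 * c2 + 31/21600 * c1 ^ 5) \<le> 13 / 48"
proof -
  have "norm (c5 / 10 + 7/240 * c1 * c4 + c2 * c3 / 120 + 13/720 * c1\<^sup>2 * c3
      + 47/2880 * c1 * c2\<^sup>2 - 287/43200 * c1 ^ 3 * c2 + 31/21600 * c1 ^ 5)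
      \<le> 1 / 10 + 7/240 + 1 / 120 + 13/720 + 47/2880 + 287/43200 + 31/21600"
    using assms
    by (intro norm_triangle_mono order_trans[OF norm_triangle_ineq4 add_mono])
       (simp_all add: norm_divide norm_mult norm_power mult_le_one power_le_one)
  also have "\<dots> \<le> 13 / 48"
    by simp
  finally show ?thesis .
qed

lemma class_SGE:
  assumes "f \<in> class_SG"
  obtains w where "f holomorphic_on ball 0 1" "f 0 = 0" "deriv f 0 = 1"
    "w holomorphic_on ball 0 1" "w 0 = 0" "\<forall>z\<in>ball 0 1. norm (w z) < 1"
    "\<forall>z\<in>ball 0 1. z * deriv f z = f z * Psi (w z)"
proof -
  from assms have f: "f holomorphic_on ball 0 1" "inj_on f (ball 0 1)" "f 0 = 0" "deriv f 0 = 1"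
    and "subordinate (starlike_quot f) Psi"
    by (auto simp: class_SG_def class_S_def)
  then obtain w where w: "w holomorphic_on ball 0 1" "w 0 = 0" "\<forall>z\<in>ball 0 1. norm (w z) < 1"
    and quot: "\<forall>z\<in>ball 0 1. starlike_quot f z = Psi (w z)"
    by (auto simp: subordinate_def)
  have "z * deriv f z = f z * Psi (w z)" if "z \<in> ball 0 1" for z
  proof (cases "z = 0")
    case False
    then have "f z \<noteq> 0"
      using f(2,3) that by (metis centre_in_ball inj_on_def zero_less_one)
    moreover have "z * deriv f z / f z = Psi (w z)"
      using False bspec[OF quot that] by (simp add: starlike_quot_def)
    ultimately show ?thesis
      by (simp add: field_simps)
  qed (simp add: f)
  with f w that show ?thesis
    by blast
qed

lemma fps_X_deriv_eq_mult_gregory_coeff_bounds: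
  fixes A W :: "complex fps"
  assumes eq: "fps_X * fps_deriv A = A * (gregory_fps oo W)"
    and "A $ 0 = 0" "A $ 1 = 1" "W $ 0 = 0"
    and sum_le: "(\<Sum>k\<le>5. (norm (W $ k))\<^sup>2) \<le> 1"
  shows "norm (A $ 2) \<le> 1 / 2" "norm (A $ 3) \<le> 1 / 4" "norm (A $ 4) \<le> 1 / 6"
    "norm (A $ 5) \<le> 1 / 8" "norm (A $ 6) \<le> 13 / 48"
proof -
  note a = fps_X_deriv_eq_mult_gregory_nth[OF assms(1-4)]
  have le1: "norm (W $ k) \<le> 1" if "k \<le> 5" for k
    using that order_trans[OF member_le_sum[of k "{..5}"] sum_le] by (simp add: abs_square_le_1)
  have "(norm (W $ 1))\<^sup>2 + (norm (W $ 2))\<^sup>2 + (norm (W $ 3))\<^sup>2 + (norm (W $ 4))\<^sup>2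
      + (norm (W $ 5))\<^sup>2 \<le> 1"
    using sum_le by (simp add: atMost_nat_numeral \<open>W $ 0 = 0\<close>)
  then have sq: "(norm (W $ 1))\<^sup>2 + (norm (W $ 2))\<^sup>2 \<le> 1"
    "(norm (W $ 1))\<^sup>2 + (norm (W $ 2))\<^sup>2 + (norm (W $ 3))\<^sup>2 \<le> 1"
    "(norm (W $ 1))\<^sup>2 + (norm (W $ 2))\<^sup>2 + (norm (W $ 3))\<^sup>2 + (norm (W $ 4))\<^sup>2 \<le> 1"
    using zero_le_power2[of "norm (W $ 3)"] zero_le_power2[of "norm (W $ 4)"]
      zero_le_power2[of "norm (W $ 5)"] by linarith+
  show "norm (A $ 2) \<le> 1 / 2"
    using le1[of 1] by (simp add: a norm_divide)
  show "norm (A $ 3) \<le> 1 / 4"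
    unfolding a by (rule norm_coeff3_formula_le[OF sq(1)])
  show "norm (A $ 4) \<le> 1 / 6"
    unfolding a by (rule norm_coeff4_formula_le[OF sq(2)])
  show "norm (A $ 5) \<le> 1 / 8"
    unfolding a by (rule norm_coeff5_formula_le[OF sq(3)])
  show "norm (A $ 6) \<le> 13 / 48"
    unfolding a by (rule norm_coeff6_formula_le) (simp_all add: le1)
qed

lemma class_SG_coeff_bounds:
  assumes "f \<in> class_SG"
  shows "norm (taylor_coeff f 2) \<le> 1 / 2" "norm (taylor_coeff f 3) \<le> 1 / 4"
    "norm (taylor_coeff f 4) \<le> 1 / 6" "norm (taylor_coeff f 5) \<le> 1 / 8"
    "norm (taylor_coeff f 6) \<le> 13 / 48"
proof -
  obtain w where f: "f holomorphic_on ball 0 1" "f 0 = 0" "deriv f 0 = 1"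
    and w: "w holomorphic_on ball 0 1" "w 0 = 0" "\<forall>z\<in>ball 0 1. norm (w z) < 1"
    and eq: "\<forall>z\<in>ball 0 1. z * deriv f z = f z * Psi (w z)"
    using class_SGE[OF assms] by metis
  define A where "A = fps_expansion f 0"
  define W where "W = fps_expansion w 0"
  have tc: "taylor_coeff f n = A $ n" "taylor_coeff w n = W $ n" for n
    unfolding A_def W_def
    using f(1) w(1) by (simp_all add: taylor_coeff_eq_fps_nth holomorphic_on_unit_disk_has_fps_expansion)
  have "A $ 0 = 0" "A $ 1 = 1" "W $ 0 = 0"
    using f(2,3) w(2) tc[of 0] tc[of 1] by (simp_all add: taylor_coeff_def)
  moreover have "(\<Sum>k\<le>5. (norm (W $ k))\<^sup>2) \<le> 1"
    using taylor_coeff_square_sum_le[OF w(1), of 1 5] w(3) by (simp add: tc less_imp_le)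
  ultimately show "norm (taylor_coeff f 2) \<le> 1 / 2" "norm (taylor_coeff f 3) \<le> 1 / 4"
    "norm (taylor_coeff f 4) \<le> 1 / 6" "norm (taylor_coeff f 5) \<le> 1 / 8"
    "norm (taylor_coeff f 6) \<le> 13 / 48"
    unfolding tc(1)
    using fps_X_deriv_eq_mult_gregory_coeff_bounds[OF Psi_subordination_fps_eq[OF f(1) w(1,2) eq,
        folded A_def W_def]]
    by simp_all
qed

section \<open>Univalence and extremal functions\<close>

lemma Re_cnj_diff_mult_diff_pos:
  fixes g g' :: "complex \<Rightarrow> complex"
  assumes "convex S"
    and deriv: "\<And>z. z \<in> S \<Longrightarrow> (g has_field_derivative g' z) (at z)"
    and pos: "\<And>z. z \<in> S \<Longrightarrow> Re (g' z) > 0"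
    and "a \<in> S" "b \<in> S" "a \<noteq> b"
  shows "Re (cnj (b - a) * (g b - g a)) > 0"
proof -
  define d where "d = b - a"
  define u where "u = (\<lambda>t. Re (cnj d * g (a + of_real t * d)))"
  have seg: "a + of_real t * d \<in> S" if "t \<in> {0..1}" for t
    using convexD[OF \<open>convex S\<close> \<open>a \<in> S\<close> \<open>b \<in> S\<close>, of "1 - t" t] that
    by (simp add: d_def scaleR_conv_of_real algebra_simps)
  have "u 0 < u 1"
  proof (rule DERIV_pos_imp_increasing[of 0 1 u])
    fix t :: real assume t: "0 \<le> t" "t \<le> 1"
    have "((\<lambda>z. g (a + z * d)) has_field_derivative g' (a + of_real t * d) * d) (at (of_real t))"
      using DERIV_chain2[OF deriv[OF seg] DERIV_add[OF DERIV_const DERIV_cmult_right[OF DERIV_ident]]] t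
      by (simp add: mult.commute)
    then have "((\<lambda>t. g (a + of_real t * d)) has_vector_derivative g' (a + of_real t * d) * d) (at t)"
      by (rule has_vector_derivative_real_field)
    then have "(u has_real_derivative Re (cnj d * (g' (a + of_real t * d) * d))) (at t)"
      unfolding u_def has_real_derivative_iff_has_vector_derivative
      by (intro bounded_linear.has_vector_derivative[OF bounded_linear_compose[OF bounded_linear_Re
            bounded_linear_mult_right]])
    moreover have "Re (cnj d * (g' (a + of_real t * d) * d)) = (norm d)\<^sup>2 * Re (g' (a + of_real t * d))"
    proof -
      have "cnj d * (g' (a + of_real t * d) * d) = of_real ((norm d)\<^sup>2) * g' (a + of_real t * d)"
        unfolding complex_norm_square by (simp add: mult_ac)
      also have "Re \<dots> = (norm d)\<^sup>2 * Re (g' (a + of_real t * d))"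
        by (simp del: of_real_power)
      finally show ?thesis .
    qed
    moreover have "(norm d)\<^sup>2 * Re (g' (a + of_real t * d)) > 0"
      using pos[OF seg] t \<open>a \<noteq> b\<close> by (simp add: d_def)
    ultimately show "\<exists>y. (u has_real_derivative y) (at t) \<and> 0 < y"
      by auto
  qed simp
  then show ?thesis
    by (simp add: u_def d_def algebra_simps)
qed

lemma inj_on_if_Re_deriv_pos:
  fixes g g' :: "complex \<Rightarrow> complex"
  assumes "convex S"
    and "\<And>z. z \<in> S \<Longrightarrow> (g has_field_derivative g' z) (at z)"
    and "\<And>z. z \<in> S \<Longrightarrow> Re (g' z) > 0"
  shows "inj_on g S"
  using Re_cnj_diff_mult_diff_pos[OF assms] by (intro inj_onI) force

lemma Re_Psi_pos:
  assumes "norm z < 1"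
  shows "Re (Psi z) > 0"
proof (cases "z = 0")
  case False
  have "Re (cnj (z - 0) * (Ln (1 + z) - Ln (1 + 0))) > 0"
  proof (rule Re_cnj_diff_mult_diff_pos[OF convex_ball])
    fix u :: complex assume "u \<in> ball 0 1"
    then show "((\<lambda>z. Ln (1 + z)) has_field_derivative inverse (1 + u)) (at u)"
      by (simp add: Ln_one_plus_has_field_derivative)
    show "Re (inverse (1 + u)) > 0"
      using \<open>u \<in> ball 0 1\<close> abs_Re_le_cmod[of u] by (auto simp: inverse_eq_divide Re_complex_div_gt_0)
  qed (use assms False in auto)
  then have "Re (z * cnj (Ln (1 + z))) > 0"
    by (simp add: mult.commute)
  then show ?thesis
    using False by (simp add: Psi_def Re_complex_div_gt_0)
qed (simp add: Psi_def)

lemma inj_on_exp_comp_lift: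
  fixes H :: "complex \<Rightarrow> complex"
  assumes inj: "inj_on H {\<zeta>. Re \<zeta> < 0}"
    and shift: "\<And>\<zeta> n. H (\<zeta> + 2 * pi * \<i> * of_int n) = H \<zeta> + 2 * pi * \<i> * of_int n"
  shows "inj_on (\<lambda>z. exp (H (Ln z))) (ball 0 1 - {0})"
proof (rule inj_onI)
  fix z1 z2 assume z1: "z1 \<in> ball 0 1 - {0}" and z2: "z2 \<in> ball 0 1 - {0}"
    and "exp (H (Ln z1)) = exp (H (Ln z2))"
  then obtain n :: int where "H (Ln z1) = H (Ln z2) + 2 * pi * \<i> * of_int n"
    by (auto simp: exp_eq mult_ac)
  then have "H (Ln z1) = H (Ln z2 + 2 * pi * \<i> * of_int n)"
    using shift[of "Ln z2" n] by simp
  moreover have "Ln z1 \<in> {\<zeta>. Re \<zeta> < 0}" "Ln z2 + 2 * pi * \<i> * of_int n \<in> {\<zeta>. Re \<zeta> < 0}"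
    using z1 z2 by simp_all
  ultimately have "Ln z1 = Ln z2 + 2 * pi * \<i> * of_int n"
    using inj by (auto dest: inj_onD)
  then have "exp (Ln z1) = exp (Ln z2)"
    using exp_plus_2pin[of "Ln z2" n] by (simp add: mult_ac)
  with z1 z2 show "z1 = z2"
    by simp
qed

lemma inj_on_mult_exp:
  assumes deriv: "\<And>z. z \<in> ball 0 1 \<Longrightarrow> (q has_field_derivative q' z) (at z)"
    and pos: "\<And>z. z \<in> ball 0 1 \<Longrightarrow> Re (1 + z * q' z) > 0"
  shows "inj_on (\<lambda>z. z * exp (q z)) (ball 0 1)"
proof -
  define H where "H = (\<lambda>\<zeta>. \<zeta> + q (exp \<zeta>))"
  have exp_in: "exp \<zeta> \<in> ball 0 1" if "\<zeta> \<in> {\<zeta>. Re \<zeta> < 0}" for \<zeta>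
    using that by simp
  have "inj_on H {\<zeta>. Re \<zeta> < 0}"
  proof (rule inj_on_if_Re_deriv_pos[OF convex_halfspace_Re_lt])
    fix \<zeta> assume "\<zeta> \<in> {\<zeta>. Re \<zeta> < 0}"
    show "(H has_field_derivative 1 + exp \<zeta> * q' (exp \<zeta>)) (at \<zeta>)"
      unfolding H_def using DERIV_chain2[OF deriv[OF exp_in[OF \<open>\<zeta> \<in> _\<close>]] DERIV_exp]
      by (auto intro!: derivative_eq_intros simp: mult.commute)
    show "Re (1 + exp \<zeta> * q' (exp \<zeta>)) > 0"
      by (rule pos[OF exp_in[OF \<open>\<zeta> \<in> _\<close>]])
  qed
  moreover have "H (\<zeta> + 2 * pi * \<i> * of_int n) = H \<zeta> + 2 * pi * \<i> * of_int n" for \<zeta> n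
    using exp_plus_2pin[of \<zeta> n] by (simp add: H_def mult_ac)
  ultimately have "inj_on (\<lambda>z. exp (H (Ln z))) (ball 0 1 - {0})"
    by (rule inj_on_exp_comp_lift)
  moreover have "exp (H (Ln z)) = z * exp (q z)" if "z \<noteq> 0" for z
    using that by (simp add: H_def exp_add)
  ultimately have "inj_on (\<lambda>z. z * exp (q z)) (ball 0 1 - {0})"
    by (simp add: inj_on_def)
  then show ?thesis
    unfolding inj_on_def by (metis DiffI exp_not_eq_zero mult_eq_0_iff singletonD)
qed

lemma mult_exp_has_field_derivative:
  "(q has_field_derivative q') (at z) \<Longrightarrow>
    ((\<lambda>z. z * exp (q z)) has_field_derivative exp (q z) * (1 + z * q')) (at z)"
  by (auto intro!: derivative_eq_intros simp: algebra_simps)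

lemma mult_exp_in_class_SG:
  assumes deriv: "\<And>z. z \<in> ball 0 1 \<Longrightarrow> (q has_field_derivative q' z) (at z)" and "q 0 = 0"
    and w: "w holomorphic_on ball 0 1" "w 0 = 0" "\<forall>z\<in>ball 0 1. norm (w z) < 1"
    and sub: "\<And>z. z \<in> ball 0 1 \<Longrightarrow> 1 + z * q' z = Psi (w z)"
  shows "(\<lambda>z. z * exp (q z)) \<in> class_SG"
proof -
  define F where "F = (\<lambda>z. z * exp (q z))"
  have F_deriv: "deriv F z = exp (q z) * Psi (w z)" if "z \<in> ball 0 1" for z
    using DERIV_imp_deriv[OF mult_exp_has_field_derivative[OF deriv[OF that]]] sub[OF that]
    by (simp add: F_def)
  have "F holomorphic_on ball 0 1"
    unfolding holomorphic_on_open[OF open_ball] F_def using mult_exp_has_field_derivative[OF deriv] by blast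
  moreover have "inj_on F (ball 0 1)"
    unfolding F_def by (rule inj_on_mult_exp[OF deriv]) (auto simp: sub intro!: Re_Psi_pos w(3)[rule_format])
  moreover have "deriv F 0 = 1"
    using F_deriv[of 0] by (simp add: \<open>q 0 = 0\<close> w(2))
  moreover have "starlike_quot F z = Psi (w z)" if "z \<in> ball 0 1" for z
    using F_deriv[OF that] by (simp add: starlike_quot_def F_def w(2))
  ultimately show ?thesis
    unfolding class_SG_def class_S_def subordinate_def using w by (auto simp: F_def)
qed

lemma Psi_sub_one_div_primitive:
  obtains g g' where "g 0 = 0" "\<And>z. z \<in> ball 0 1 \<Longrightarrow> (g has_field_derivative g' z) (at z)"
    "\<And>z. z * g' z = Psi z - 1"
proof -
  define g' where "g' = (\<lambda>z. if z = 0 then deriv Psi 0 else (Psi z - Psi 0) / (z - 0))"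
  have "g' holomorphic_on ball 0 1"
    unfolding g'_def by (rule pole_lemma[OF Psi_holomorphic]) auto
  then obtain g where g: "\<And>z. z \<in> ball 0 1 \<Longrightarrow> (g has_field_derivative g' z) (at z within ball 0 1)"
    using holomorphic_convex_primitive'[OF convex_ball open_ball] by blast
  have "((\<lambda>z. g z - g 0) has_field_derivative g' z) (at z)" if "z \<in> ball 0 1" for z
    using g[OF that] at_within_open[OF that open_ball] by (auto intro!: derivative_eq_intros)
  moreover have "z * g' z = Psi z - 1" for z
    by (cases "z = 0") (simp_all add: g'_def)
  ultimately show ?thesis
    using that[of "\<lambda>z. g z - g 0" g'] by simp
qed

lemma class_SG_power_extremal:
  assumes "k > 0"
  obtains f where "f \<in> class_SG" "\<forall>z\<in>ball 0 1. z * deriv f z = f z * Psi (z ^ k)"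
proof -
  obtain g g' where g: "g 0 = 0" "\<And>z. z \<in> ball 0 1 \<Longrightarrow> (g has_field_derivative g' z) (at z)"
    "\<And>z. z * g' z = Psi z - 1"
    using Psi_sub_one_div_primitive by blast
  define q where "q = (\<lambda>z. g (z ^ k) / of_nat k)"
  define q' where "q' = (\<lambda>z. g' (z ^ k) * z ^ (k - 1))"
  have pow_in: "z ^ k \<in> ball 0 1" if "z \<in> ball 0 1" for z :: complex
    using that \<open>k > 0\<close> by (simp add: norm_power power_less_one_iff)
  have deriv: "(q has_field_derivative q' z) (at z)" if "z \<in> ball 0 1" for z
  proof -
    have "((\<lambda>z. z ^ k) has_field_derivative of_nat k * z ^ (k - 1)) (at z)"
      by (auto intro!: derivative_eq_intros)
    then have "((\<lambda>z. g (z ^ k)) has_field_derivative g' (z ^ k) * (of_nat k * z ^ (k - 1))) (at z)"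
      using DERIV_chain2[of g "g' (z ^ k)" "\<lambda>z. z ^ k"] g(2)[OF pow_in[OF that]] by blast
    then show ?thesis
      unfolding q_def q'_def using DERIV_cdivide[of _ _ z UNIV "of_nat k"] \<open>k > 0\<close> by fastforce
  qed
  have sub: "1 + z * q' z = Psi (z ^ k)" for z
  proof -
    have "z * q' z = z ^ k * g' (z ^ k)"
      using \<open>k > 0\<close> by (simp add: q'_def power_eq_if mult_ac)
    then show ?thesis
      by (simp add: g(3))
  qed
  have "(\<lambda>z. z * exp (q z)) \<in> class_SG"
    using \<open>k > 0\<close> pow_in
    by (intro mult_exp_in_class_SG[OF deriv _ _ _ _ sub])
       (auto simp: q_def g(1) zero_power intro!: holomorphic_intros)
  moreover have "z * deriv (\<lambda>z. z * exp (q z)) z = z * exp (q z) * Psi (z ^ k)" if "z \<in> ball 0 1" for z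
    using DERIV_imp_deriv[OF mult_exp_has_field_derivative[OF deriv[OF that]]] by (simp add: sub)
  ultimately show ?thesis
    using that by blast
qed

lemma class_SG_coeff_bound_attained:
  assumes "n \<in> {2..5}"
  shows "\<exists>f\<in>class_SG. norm (taylor_coeff f n) = 1 / (2 * (real n - 1))"
proof -
  define k where "k = n - 1"
  have "k > 0"
    using assms by (simp add: k_def)
  then obtain f where "f \<in> class_SG" and eq: "\<forall>z\<in>ball 0 1. z * deriv f z = f z * Psi (z ^ k)"
    using class_SG_power_extremal by blast
  then have f: "f holomorphic_on ball 0 1" "f 0 = 0" "deriv f 0 = 1"
    by (simp_all add: class_SG_def class_S_def)
  define A where "A = fps_expansion f 0"
  have tc: "taylor_coeff f m = A $ m" for m
    unfolding A_def using f(1) by (simp add: taylor_coeff_eq_fps_nth holomorphic_on_unit_disk_has_fps_expansion)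
  have "A $ 0 = 0" "A $ 1 = 1"
    using f(2,3) tc[of 0] tc[of 1] by (simp_all add: taylor_coeff_def)
  have "fps_expansion (\<lambda>z. z ^ k) 0 = fps_X ^ k"
    by (intro fps_expansion_unique_complex[OF holomorphic_on_unit_disk_has_fps_expansion
          has_fps_expansion_fps_X_power] holomorphic_intros)
  then have "fps_X * fps_deriv A = A * (gregory_fps oo fps_X ^ k)"
    using Psi_subordination_fps_eq[OF f(1) _ _ eq] \<open>k > 0\<close> unfolding A_def
    by (simp add: zero_power holomorphic_intros)
  note a = fps_X_deriv_eq_mult_gregory_nth[OF this \<open>A $ 0 = 0\<close> \<open>A $ 1 = 1\<close>]
  have "n = 2 \<or> n = 3 \<or> n = 4 \<or> n = 5"
    using assms by auto
  then have "A $ n = of_real (1 / (2 * (real n - 1)))"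
    using a by (auto simp: k_def)
  then have "norm (taylor_coeff f n) = 1 / (2 * (real n - 1))"
    using assms by (simp only: tc norm_of_real) simp
  with \<open>f \<in> class_SG\<close> show ?thesis
    by blast
qed

theorem theorem1:
  shows "(\<forall>f\<in>class_SG.
            (\<forall>n\<in>{2..5::nat}. norm (taylor_coeff f n) \<le> 1 / (2 * (real n - 1))) \<and>
            norm (taylor_coeff f 6) \<le> 13 / 48)
       \<and> (\<forall>n\<in>{2..5::nat}. \<exists>f\<in>class_SG. norm (taylor_coeff f n) = 1 / (2 * (real n - 1)))"
proof -
  have "{2..5::nat} = {2, 3, 4, 5}"
    by auto
  then have "\<forall>n\<in>{2..5::nat}. norm (taylor_coeff f n) \<le> 1 / (2 * (real n - 1))" if "f \<in> class_SG" for f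
    using class_SG_coeff_bounds[OF that] by simp
  then show ?thesis
    using class_SG_coeff_bounds(5) class_SG_coeff_bound_attained by blast
qed

end
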